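(* Let $G$ be a group with finite presentation $\mathcal P=\langle t,\mathcal A:\mathcal R,\ t^{-1}at=\phi(a)\ (a\in\mathcal A)\rangle$, $A=\langle\mathcal A\rangle\le G$, $X$ the Cayley 2-complex, $M,N\ge0$ integers, and $t^NA\cdot Q(M)=\{t^Nat^{-m}:a\in A,\ 0\le m\le M\}$. Let $K_0$ be the component of $X-\{at^{-m}:a\in A,\ 0\le m\le M\}$ containing the vertex $t$, and let $v$ be a vertex of the component $t^NK_0$ of $X-t^NA\cdot Q(M)$. Then for every integer $n\ge0$, $(vt^nA)\cap t^NA\cdot Q(M)=\emptyset$.
   Context: $\mathcal A$ is finite, $\mathcal R\subset F(\mathcal A)$ finite, $\phi:F(\mathcal A)\to F(\mathcal A)$ a homomorphism. $X$ is the simply connected 2-complex with vertex set $G$, 1-skeleton the Cayley graph of $G$ with respect to $\mathcal A\cup\{t\}$, and 2-cells for the relators; $G$ acts by left multiplication. *)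

theory Defs
  imports "HOL-Algebra.Group"
begin

text \<open>Words over an alphabet of generator names: a letter (x, b) stands for x if b = False
  and for x^{-1} if b = True.\<close>
type_synonym 'a word = "('a \<times> bool) list"

definition inv_word :: "'a word \<Rightarrow> 'a word" where
  "inv_word w = rev (map (\<lambda>(x, b). (x, \<not> b)) w)"

definition word_over :: "'a set \<Rightarrow> 'a word \<Rightarrow> bool" where
  "word_over S w \<longleftrightarrow> fst ` set w \<subseteq> S"

fun eval_word :: "('g, 'm) monoid_scheme \<Rightarrow> ('a \<Rightarrow> 'g) \<Rightarrow> 'a word \<Rightarrow> 'g" where
  "eval_word G f [] = \<one>\<^bsub>G\<^esub>"
| "eval_word G f ((x, b) # w) =
     (if b then inv\<^bsub>G\<^esub> (f x) else f x) \<otimes>\<^bsub>G\<^esub> eval_word G f w"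

text \<open>Equality in the group presented by relators Rel: the congruence on words generated by
  free cancellation and insertion/deletion of relators (i.e. w ~ [] iff w lies in the normal
  closure of Rel in the free group).\<close>
inductive word_equiv :: "'a word set \<Rightarrow> 'a word \<Rightarrow> 'a word \<Rightarrow> bool" for Rel where
  refl: "word_equiv Rel u u"
| sym: "word_equiv Rel u v \<Longrightarrow> word_equiv Rel v u"
| trans: "word_equiv Rel u v \<Longrightarrow> word_equiv Rel v w \<Longrightarrow> word_equiv Rel u w"
| cancel: "word_equiv Rel (u @ [(x, b), (x, \<not> b)] @ v) (u @ v)"
| relator: "r \<in> Rel \<Longrightarrow> word_equiv Rel (u @ r @ v) (u @ v)"

definition is_presentation ::
  "('g, 'm) monoid_scheme \<Rightarrow> ('a \<Rightarrow> 'g) \<Rightarrow> 'a set \<Rightarrow> 'a word set \<Rightarrow> bool" where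
  "is_presentation G f gens Rel \<longleftrightarrow>
     group G \<and> f ` gens \<subseteq> carrier G \<and> (\<forall>r\<in>Rel. word_over gens r) \<and>
     (\<forall>g\<in>carrier G. \<exists>w. word_over gens w \<and> eval_word G f w = g) \<and>
     (\<forall>w. word_over gens w \<longrightarrow> (eval_word G f w = \<one>\<^bsub>G\<^esub> \<longleftrightarrow> word_equiv Rel w []))"

text \<open>The relators of the presentation
  < t, A : R, t^{-1} a t = phi(a) (a in A) >, i.e. R together with t^{-1} a t phi(a)^{-1}.\<close>
definition torus_relators :: "'a \<Rightarrow> 'a set \<Rightarrow> 'a word set \<Rightarrow> ('a \<Rightarrow> 'a word) \<Rightarrow> 'a word set" where
  "torus_relators t As R phi =
     R \<union> {[(t, True), (a, False), (t, False)] @ inv_word (phi a) | a. a \<in> As}"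

text \<open>Cayley 2-complex X with vertex set carrier G, an edge g -- g s for each generator s,
  and a 2-cell g.r for each g and relator r whose boundary passes through the vertices
  g * (prefix of r).  For a set S of vertices, two vertices u, w not in S are adjacent in
  X - S iff they are joined by an edge, or both lie on the boundary of a common 2-cell
  (the open 2-cell together with its boundary points outside S is connected).\<close>
definition cayley_adj ::
  "('g, 'm) monoid_scheme \<Rightarrow> ('a \<Rightarrow> 'g) \<Rightarrow> 'a set \<Rightarrow> 'a word set \<Rightarrow> 'g set \<Rightarrow> 'g \<Rightarrow> 'g \<Rightarrow> bool" where
  "cayley_adj G f gens Rel S u w \<longleftrightarrow>
     u \<in> carrier G \<and> w \<in> carrier G \<and> u \<notin> S \<and> w \<notin> S \<and>
     ((\<exists>s\<in>gens. w = u \<otimes>\<^bsub>G\<^esub> f s \<or> u = w \<otimes>\<^bsub>G\<^esub> f s) \<or>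
      (\<exists>g\<in>carrier G. \<exists>r\<in>Rel. \<exists>i\<le>length r. \<exists>j\<le>length r.
          u = g \<otimes>\<^bsub>G\<^esub> eval_word G f (take i r) \<and> w = g \<otimes>\<^bsub>G\<^esub> eval_word G f (take j r)))"

text \<open>The vertex set of the connected component of X - S containing the vertex x
  (empty if x is in S).\<close>
definition comp_verts ::
  "('g, 'm) monoid_scheme \<Rightarrow> ('a \<Rightarrow> 'g) \<Rightarrow> 'a set \<Rightarrow> 'a word set \<Rightarrow> 'g set \<Rightarrow> 'g \<Rightarrow> 'g set" where
  "comp_verts G f gens Rel S x =
     {y. x \<in> carrier G \<and> x \<notin> S \<and> (cayley_adj G f gens Rel S)\<^sup>*\<^sup>* x y}"

end

theory Submission
  imports Defs "HOL-Algebra.Coset"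
begin

text \<open>Write A for the subgroup generated by As, T for the image of t, and
  AQ = {a T^-k : a in A, k >= 0} for the union of the sets A Q(M).  The relators
  t^-1 a t = phi(a) give T^-1 A T <= A, so the vertices of a relator cell at g all lie in
  g A or g T^-1 A.  From this one checks that a vertex joined to a vertex of AQ - A by an edge
  or a 2-cell lies in AQ itself.  Since A Q(M) contains A, the component K0 of the vertex T,
  which is outside AQ because no positive power of T lies in A (count t-exponents), therefore
  avoids AQ.  Finally, if T^N k T^n a = T^N b T^-m with k in K0, then k T^n a = b T^-m lies
  in AQ, hence so does k: a contradiction.\<close>

lemma word_over_Nil [simp]: "word_over S []"
  by (simp add: word_over_def)

lemma word_over_Cons [simp]: "word_over S ((x, b) # w) \<longleftrightarrow> x \<in> S \<and> word_over S w"
  by (auto simp: word_over_def)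

lemma word_over_append [simp]: "word_over S (u @ v) \<longleftrightarrow> word_over S u \<and> word_over S v"
  by (auto simp: word_over_def)

lemma word_over_inv_word [simp]: "word_over S (inv_word w) \<longleftrightarrow> word_over S w"
  by (auto simp: word_over_def inv_word_def image_iff) force+

lemma word_over_take: "word_over S w \<Longrightarrow> word_over S (take i w)"
  by (auto simp: word_over_def dest: in_set_takeD)

lemma word_over_mono: "word_over S w \<Longrightarrow> S \<subseteq> S' \<Longrightarrow> word_over S' w"
  by (auto simp: word_over_def)

lemma inv_word_Nil [simp]: "inv_word [] = []"
  by (simp add: inv_word_def)

lemma inv_word_Cons [simp]: "inv_word ((x, b) # w) = inv_word w @ [(x, \<not> b)]"
  by (simp add: inv_word_def)

subsection \<open>Exponent sums\<close>

fun exp_sum :: "'a \<Rightarrow> 'a word \<Rightarrow> int" where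
  "exp_sum t [] = 0"
| "exp_sum t ((x, b) # w) = (if x = t then (if b then -1 else 1) else 0) + exp_sum t w"

lemma exp_sum_append [simp]: "exp_sum t (u @ v) = exp_sum t u + exp_sum t v"
  by (induction u) auto

lemma exp_sum_inv_word [simp]: "exp_sum t (inv_word w) = - exp_sum t w"
  by (induction w) auto

lemma exp_sum_replicate [simp]: "exp_sum t (replicate j (t, False)) = int j"
  by (induction j) auto

lemma exp_sum_word_over: "word_over S w \<Longrightarrow> t \<notin> S \<Longrightarrow> exp_sum t w = 0"
  by (induction w) auto

lemma word_equiv_exp_sum:
  "word_equiv Rel u v \<Longrightarrow> (\<And>r. r \<in> Rel \<Longrightarrow> exp_sum t r = 0) \<Longrightarrow> exp_sum t u = exp_sum t v"
  by (induction rule: word_equiv.induct) auto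

lemma exp_sum_torus_relators:
  assumes "t \<notin> As" "\<forall>r\<in>R. word_over As r" "\<forall>a\<in>As. word_over As (phi a)"
    and "r \<in> torus_relators t As R phi"
  shows "exp_sum t r = 0"
  using assms by (auto simp: torus_relators_def exp_sum_word_over)

context group
begin

lemma inv_mult_cancel_left [simp]:
  "x \<in> carrier G \<Longrightarrow> y \<in> carrier G \<Longrightarrow> inv x \<otimes> (x \<otimes> y) = y"
  by (simp add: m_assoc[symmetric])

lemma mult_inv_cancel_left [simp]:
  "x \<in> carrier G \<Longrightarrow> y \<in> carrier G \<Longrightarrow> x \<otimes> (inv x \<otimes> y) = y"
  by (simp add: m_assoc[symmetric])

lemma eval_word_closed:
  "f ` S \<subseteq> carrier G \<Longrightarrow> word_over S w \<Longrightarrow> eval_word G f w \<in> carrier G"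
  by (induction w) (auto simp: image_subset_iff)

lemma eval_word_append:
  assumes "f ` S \<subseteq> carrier G" "word_over S u" "word_over S v"
  shows "eval_word G f (u @ v) = eval_word G f u \<otimes> eval_word G f v"
  using assms
proof (induction u)
  case Nil
  then show ?case by (simp add: eval_word_closed)
next
  case (Cons l u)
  then show ?case by (cases l) (auto simp: m_assoc eval_word_closed image_subset_iff)
qed

lemma eval_word_inv_word:
  assumes "f ` S \<subseteq> carrier G" "word_over S w"
  shows "eval_word G f (inv_word w) = inv (eval_word G f w)"
  using assms
proof (induction w)
  case Nil
  then show ?case by simp
next
  case (Cons l w)
  obtain x b where l: "l = (x, b)" by (cases l)
  with Cons show ?case
    by (auto simp: eval_word_append[OF Cons.prems(1)] eval_word_closed inv_mult_group image_subset_iff)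
qed

lemma eval_word_replicate: "f x \<in> carrier G \<Longrightarrow> eval_word G f (replicate j (x, False)) = f x [^] j"
  by (induction j) (simp_all add: nat_pow_Suc2[symmetric])

lemma subgroup_eval_words:
  assumes "f ` S \<subseteq> carrier G"
  shows "subgroup {eval_word G f w | w. word_over S w} G"
proof (rule subgroup.intro)
  fix x y assume "x \<in> {eval_word G f w | w. word_over S w}" "y \<in> {eval_word G f w | w. word_over S w}"
  then obtain u v where "word_over S u" "word_over S v" "x = eval_word G f u" "y = eval_word G f v"
    by blast
  then show "x \<otimes> y \<in> {eval_word G f w | w. word_over S w}"
    by (metis (mono_tags, lifting) CollectI assms eval_word_append word_over_append)
next
  fix x assume "x \<in> {eval_word G f w | w. word_over S w}"
  then obtain u where "word_over S u" "x = eval_word G f u" by blast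
  then show "inv x \<in> {eval_word G f w | w. word_over S w}"
    by (metis (mono_tags, lifting) CollectI assms eval_word_inv_word word_over_inv_word)
qed (use assms eval_word_closed in \<open>auto intro: exI[of _ "[]"]\<close>)

end

subsection \<open>Ascending HNN data\<close>

locale ascending_hnn = group G for G (structure) +
  fixes A T
  assumes subgroup_A: "subgroup A G"
    and T_closed [simp]: "T \<in> carrier G"
    and inv_T_conj_closed: "c \<in> A \<Longrightarrow> inv T \<otimes> c \<otimes> T \<in> A"
begin

sublocale A: subgroup A G
  by (rule subgroup_A)

lemma inv_T_pow_conj_closed: "c \<in> A \<Longrightarrow> inv (T [^] (k::nat)) \<otimes> c \<otimes> T [^] k \<in> A"
proof (induction k)
  case 0
  then show ?case by simp
next
  case (Suc k)
  have "inv (T [^] Suc k) \<otimes> c \<otimes> T [^] Suc k = inv T \<otimes> (inv (T [^] k) \<otimes> c \<otimes> T [^] k) \<otimes> T"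
    using Suc.prems by (simp add: nat_pow_Suc2 inv_mult_group m_assoc)
  then show ?case
    using Suc by (simp add: inv_T_conj_closed)
qed

definition AQ :: "'a set" where
  "AQ = {g \<in> carrier G. \<exists>k::nat. g \<otimes> T [^] k \<in> A}"

lemma AQ_mult_A_iff:
  assumes g: "g \<in> carrier G" and c: "c \<in> A"
  shows "g \<otimes> c \<in> AQ \<longleftrightarrow> g \<in> AQ"
proof -
  have right_mult: "h \<otimes> d \<in> AQ" if "h \<in> AQ" "d \<in> A" for h d
  proof -
    obtain k :: nat where k: "h \<otimes> T [^] k \<in> A" "h \<in> carrier G"
      using \<open>h \<in> AQ\<close> by (auto simp: AQ_def)
    have "h \<otimes> d \<otimes> T [^] k = (h \<otimes> T [^] k) \<otimes> (inv (T [^] k) \<otimes> d \<otimes> T [^] k)"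
      using k A.mem_carrier[OF \<open>d \<in> A\<close>] by (simp add: m_assoc)
    also have "\<dots> \<in> A"
      using k \<open>d \<in> A\<close> by (blast intro: A.m_closed inv_T_pow_conj_closed)
    finally show ?thesis
      using k \<open>d \<in> A\<close> A.mem_carrier by (auto simp: AQ_def)
  qed
  have "g = g \<otimes> c \<otimes> inv c"
    using g c by (simp add: m_assoc)
  then show ?thesis
    using right_mult[of g c] right_mult[of "g \<otimes> c" "inv c"] c by (metis A.m_inv_closed)
qed

lemma A_mult_inv_T_pow_in_AQ: "b \<in> A \<Longrightarrow> b \<otimes> inv (T [^] (m::nat)) \<in> AQ"
  by (auto simp: AQ_def m_assoc intro!: exI[of _ m])

lemma AQ_of_mult_T_pow:
  assumes "g \<in> carrier G" "g \<otimes> T [^] (n::nat) \<in> AQ"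
  shows "g \<in> AQ"
proof -
  obtain k :: nat where "g \<otimes> T [^] n \<otimes> T [^] k \<in> A"
    using assms(2) by (auto simp: AQ_def)
  then have "g \<otimes> T [^] (n + k) \<in> A"
    using assms(1) by (simp add: m_assoc nat_pow_mult)
  then show ?thesis
    using assms(1) by (auto simp: AQ_def)
qed

lemma AQ_mult_inv_T: "g \<in> AQ \<Longrightarrow> g \<otimes> inv T \<in> AQ"
proof -
  assume "g \<in> AQ"
  then obtain k :: nat where k: "g \<in> carrier G" "g \<otimes> T [^] k \<in> A"
    by (auto simp: AQ_def)
  have "g \<otimes> inv T \<otimes> T [^] Suc k = g \<otimes> T [^] k"
    unfolding nat_pow_Suc2[OF T_closed] using k by (simp add: m_assoc)
  with k show ?thesis
    by (auto simp: AQ_def intro!: exI[of _ "Suc k"])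
qed

lemma AQ_mult_T: "g \<in> AQ \<Longrightarrow> g \<notin> A \<Longrightarrow> g \<otimes> T \<in> AQ"
proof -
  assume "g \<in> AQ" "g \<notin> A"
  then obtain k :: nat where k: "g \<in> carrier G" "g \<otimes> T [^] k \<in> A"
    by (auto simp: AQ_def)
  with \<open>g \<notin> A\<close> obtain j where "k = Suc j"
    by (cases k) auto
  with k have "g \<otimes> T \<otimes> T [^] j \<in> A"
    by (simp add: m_assoc nat_pow_comm[of T 1 j, simplified])
  with k show ?thesis
    by (auto simp: AQ_def)
qed

lemma T_notin_AQ:
  assumes "\<And>j::nat. 0 < j \<Longrightarrow> T [^] j \<notin> A"
  shows "T \<notin> AQ"
proof
  assume "T \<in> AQ"
  then obtain k :: nat where "T \<otimes> T [^] k \<in> A"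
    by (auto simp: AQ_def)
  then show False
    using assms[of "Suc k"] by (simp add: nat_pow_comm[of T 1 k, simplified])
qed

lemma AQ_mult_cell:
  assumes "g \<in> AQ" "p \<in> A \<union> (inv T <# A)"
  shows "g \<otimes> p \<in> AQ"
  using assms(2)
proof
  assume "p \<in> A"
  then show ?thesis
    using assms(1) AQ_mult_A_iff by (simp add: AQ_def)
next
  assume "p \<in> inv T <# A"
  then obtain c where c: "c \<in> A" and p: "p = inv T \<otimes> c"
    by (auto simp: l_coset_def)
  have "g \<otimes> inv T \<in> AQ" "g \<in> carrier G"
    using assms(1) AQ_mult_inv_T by (auto simp: AQ_def)
  then show ?thesis
    using AQ_mult_A_iff[of "g \<otimes> inv T" c] c by (simp add: p m_assoc)
qed

lemma AQ_of_mult_cell: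
  assumes g: "g \<in> carrier G" and q: "q \<in> A \<union> (inv T <# A)" and gq: "g \<otimes> q \<in> AQ" "g \<otimes> q \<notin> A"
  shows "g \<in> AQ"
  using q
proof
  assume "q \<in> A"
  then show ?thesis
    using AQ_mult_A_iff g gq by blast
next
  assume "q \<in> inv T <# A"
  then obtain c where c: "c \<in> A" and q: "q = inv T \<otimes> c"
    by (auto simp: l_coset_def)
  have gq_eq: "g \<otimes> q = g \<otimes> inv T \<otimes> c"
    using g c by (simp add: q m_assoc)
  have "g \<otimes> inv T \<in> AQ"
    using AQ_mult_A_iff[of "g \<otimes> inv T" c] g c gq by (simp add: gq_eq)
  moreover have "g \<otimes> inv T \<notin> A"
    using gq(2) c by (auto simp: gq_eq)
  ultimately have "g \<otimes> inv T \<otimes> T \<in> AQ"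
    by (rule AQ_mult_T)
  then show ?thesis
    using g by (simp add: m_assoc)
qed

lemma A_subset_A_mult_inv_T_pows: "A \<subseteq> {a \<otimes> inv (T [^] m) | a m. a \<in> A \<and> m \<le> (M::nat)}"
proof
  fix a assume "a \<in> A"
  then have "a = a \<otimes> inv (T [^] (0::nat))"
    by (simp add: A.mem_carrier)
  with \<open>a \<in> A\<close> show "a \<in> {a \<otimes> inv (T [^] m) | a m. a \<in> A \<and> m \<le> M}"
    by blast
qed

lemma translate_disjoint:
  assumes h: "h \<in> carrier G" and k: "k \<in> carrier G" "k \<notin> AQ"
  shows "{h \<otimes> k \<otimes> T [^] (n::nat) \<otimes> a | a. a \<in> A}
    \<inter> {h \<otimes> b \<otimes> inv (T [^] (m::nat)) | b m. b \<in> A} = {}"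
proof -
  have "h \<otimes> k \<otimes> T [^] n \<otimes> a \<noteq> h \<otimes> b \<otimes> inv (T [^] m)" if "a \<in> A" "b \<in> A" for a b and m :: nat
  proof
    have ab: "a \<in> carrier G" "b \<in> carrier G"
      using that by (auto intro: A.mem_carrier)
    assume "h \<otimes> k \<otimes> T [^] n \<otimes> a = h \<otimes> b \<otimes> inv (T [^] m)"
    with h k ab have "k \<otimes> T [^] n \<otimes> a = b \<otimes> inv (T [^] m)"
      by (simp add: m_assoc)
    then have "k \<otimes> T [^] n \<otimes> a \<in> AQ"
      using A_mult_inv_T_pow_in_AQ \<open>b \<in> A\<close> by simp
    then have "k \<otimes> T [^] n \<in> AQ"
      using AQ_mult_A_iff k \<open>a \<in> A\<close> by simp
    then show False
      using AQ_of_mult_T_pow k by blast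
  qed
  then show ?thesis
    by blast
qed

end

locale torus_presentation =
  fixes G :: "('g, 'm) monoid_scheme" (structure)
    and f :: "'a \<Rightarrow> 'g" and t :: 'a and As :: "'a set"
    and R :: "'a word set" and phi :: "'a \<Rightarrow> 'a word"
  assumes t_notin_As: "t \<notin> As"
    and R_over_As: "\<forall>r\<in>R. word_over As r"
    and phi_over_As: "\<forall>a\<in>As. word_over As (phi a)"
    and presentation: "is_presentation G f (insert t As) (torus_relators t As R phi)"
begin

abbreviation "Rel \<equiv> torus_relators t As R phi"
abbreviation "A \<equiv> {eval_word G f w | w. word_over As w}"
abbreviation "T \<equiv> f t"

sublocale group G
  using presentation by (simp add: is_presentation_def)

lemma f_gens_closed: "f ` insert t As \<subseteq> carrier G"
  using presentation by (simp add: is_presentation_def)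

lemma f_As_closed: "f ` As \<subseteq> carrier G"
  using f_gens_closed by blast

lemma T_in_carrier [simp]: "T \<in> carrier G"
  using f_gens_closed by blast

lemma eval_word_in_A: "word_over As w \<Longrightarrow> eval_word G f w \<in> A"
  by blast

lemma f_in_A: "a \<in> As \<Longrightarrow> f a \<in> A"
  using eval_word_in_A[of "[(a, False)]"] f_As_closed by (auto simp: image_subset_iff)

lemma subgroup_A: "subgroup A G"
  by (rule subgroup_eval_words[OF f_As_closed])

lemma eval_relator: "r \<in> Rel \<Longrightarrow> eval_word G f r = \<one>"
  using presentation word_equiv.relator[of r Rel "[]" "[]"] by (simp add: is_presentation_def)

lemma inv_T_conj_gen: "a \<in> As \<Longrightarrow> inv T \<otimes> f a \<otimes> T = eval_word G f (phi a)"
proof -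
  assume a: "a \<in> As"
  let ?r = "[(t, True), (a, False), (t, False)] @ inv_word (phi a)"
  have "word_over As (phi a)"
    using a phi_over_As by blast
  then have phi_a: "word_over (insert t As) (phi a)" "eval_word G f (phi a) \<in> carrier G"
    using eval_word_closed[OF f_As_closed] by (auto elim: word_over_mono)
  have fa: "f a \<in> carrier G"
    using a f_As_closed by blast
  have "?r \<in> Rel"
    using a by (auto simp: torus_relators_def)
  then have "\<one> = eval_word G f ?r"
    by (simp only: eval_relator)
  also have "\<dots> = eval_word G f [(t, True), (a, False), (t, False)] \<otimes> eval_word G f (inv_word (phi a))"
    using a phi_a by (intro eval_word_append[OF f_gens_closed]) auto
  also have "\<dots> = inv T \<otimes> f a \<otimes> T \<otimes> inv (eval_word G f (phi a))"
    using phi_a fa by (simp add: eval_word_inv_word[OF f_gens_closed] m_assoc)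
  finally have "inv T \<otimes> f a \<otimes> T \<otimes> inv (eval_word G f (phi a)) = \<one>" ..
  then show ?thesis
    using phi_a fa by (simp add: inv_solve_right')
qed

lemma inv_T_conj_closed: "c \<in> A \<Longrightarrow> inv T \<otimes> c \<otimes> T \<in> A"
proof -
  have "inv T \<otimes> eval_word G f w \<otimes> T \<in> A" if "word_over As w" for w
    using that
  proof (induction w)
    case Nil
    then show ?case
      using eval_word_in_A[of "[]"] by simp
  next
    case (Cons l w)
    obtain x b where l: "l = (x, b)"
      by (cases l)
    let ?y = "if b then inv (f x) else f x"
    have x: "x \<in> As" "f x \<in> carrier G" and w: "word_over As w"
      using Cons.prems l f_As_closed by auto
    have "inv T \<otimes> f x \<otimes> T \<in> A"
      using inv_T_conj_gen[OF x(1)] phi_over_As x(1) eval_word_in_A by simp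
    moreover have "inv T \<otimes> inv (f x) \<otimes> T = inv (inv T \<otimes> f x \<otimes> T)"
      using x by (simp add: inv_mult_group m_assoc)
    ultimately have "inv T \<otimes> ?y \<otimes> T \<in> A"
      using subgroup.m_inv_closed[OF subgroup_A] by auto
    moreover have "inv T \<otimes> eval_word G f (l # w) \<otimes> T
        = (inv T \<otimes> ?y \<otimes> T) \<otimes> (inv T \<otimes> eval_word G f w \<otimes> T)"
      using l x w eval_word_closed[OF f_As_closed w] by (simp add: m_assoc)
    ultimately show ?case
      using Cons.IH[OF w] subgroup.m_closed[OF subgroup_A] by simp
  qed
  then show "c \<in> A \<Longrightarrow> inv T \<otimes> c \<otimes> T \<in> A"
    by blast
qed

sublocale hnn: ascending_hnn G A T
  by (rule ascending_hnn.intro[OF is_group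
        ascending_hnn_axioms.intro[OF subgroup_A T_in_carrier inv_T_conj_closed]])

lemma T_pow_notin_A:
  assumes "0 < j"
  shows "T [^] (j::nat) \<notin> A"
proof
  assume "T [^] j \<in> A"
  then obtain w where w: "word_over As w" and T_pow: "T [^] j = eval_word G f w"
    by blast
  let ?u = "replicate j (t, False) @ inv_word w"
  have "word_over (insert t As) (replicate j (t, False))"
    by (induction j) auto
  then have u: "word_over (insert t As) ?u"
    using w by (auto elim: word_over_mono)
  have "eval_word G f ?u = T [^] j \<otimes> inv (eval_word G f w)"
    using w u by (simp add: eval_word_append[OF f_gens_closed] eval_word_inv_word[OF f_gens_closed]
        eval_word_replicate word_over_mono)
  then have "eval_word G f ?u = \<one>"
    using T_pow eval_word_closed[OF f_As_closed w] by simp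
  then have "word_equiv Rel ?u []"
    using presentation u by (simp add: is_presentation_def)
  then have "exp_sum t ?u = exp_sum t []"
    using exp_sum_torus_relators[OF t_notin_As R_over_As phi_over_As] by (rule word_equiv_exp_sum)
  then show False
    using assms exp_sum_word_over[OF w t_notin_As] by simp
qed

lemma relator_prefix_in_cell:
  assumes "r \<in> Rel"
  shows "eval_word G f (take i r) \<in> A \<union> (inv T <# A)"
  using assms unfolding torus_relators_def
proof (elim UnE CollectE exE conjE)
  assume "r \<in> R"
  then show ?thesis
    using R_over_As eval_word_in_A word_over_take by blast
next
  fix a assume r: "r = [(t, True), (a, False), (t, False)] @ inv_word (phi a)" and a: "a \<in> As"
  have fa: "f a \<in> carrier G" "f a \<in> A"
    using a f_As_closed f_in_A by auto
  consider "i = 0" | "i = 1" | "i = 2" | k where "i = k + 3"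
    by atomize_elim presburger
  then show ?thesis
  proof cases
    case 1
    then show ?thesis
      using eval_word_in_A[of "[]"] by simp
  next
    case 2
    then show ?thesis
      using r hnn.A.one_closed by (auto simp: l_coset_def intro!: bexI[of _ \<one>])
  next
    case 3
    then show ?thesis
      using r fa by (auto simp: l_coset_def numeral_2_eq_2 intro!: bexI[of _ "f a"])
  next
    case 4
    let ?w = "take k (inv_word (phi a))"
    have w: "word_over As ?w"
      using a phi_over_As by (simp add: word_over_take)
    have "eval_word G f (take i r) = (inv T \<otimes> f a \<otimes> T) \<otimes> eval_word G f ?w"
      using 4 r fa eval_word_closed[OF f_As_closed w] by (simp add: numeral_3_eq_3 m_assoc)
    moreover have "inv T \<otimes> f a \<otimes> T \<in> A"
      using inv_T_conj_gen[OF a] phi_over_As a eval_word_in_A by simp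
    ultimately have "eval_word G f (take i r) \<in> A"
      using eval_word_in_A[OF w] hnn.A.m_closed by simp
    then show ?thesis
      by blast
  qed
qed

lemma cayley_adj_AQ:
  assumes "A \<subseteq> S" and adj: "cayley_adj G f (insert t As) Rel S u w" and w: "w \<in> hnn.AQ"
  shows "u \<in> hnn.AQ"
proof -
  have u: "u \<in> carrier G" and w_carrier: "w \<in> carrier G" and w_notin_A: "w \<notin> A"
    using adj assms(1) by (auto simp: cayley_adj_def)
  from adj consider (edge) s where "s \<in> insert t As" "w = u \<otimes> f s \<or> u = w \<otimes> f s"
    | (cell) g r i j where "g \<in> carrier G" "r \<in> Rel"
      "u = g \<otimes> eval_word G f (take i r)" "w = g \<otimes> eval_word G f (take j r)"
    unfolding cayley_adj_def by blast
  then show ?thesis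
  proof cases
    case edge
    show ?thesis
    proof (cases "s = t")
      case True
      have "w = u \<otimes> T \<Longrightarrow> u = w \<otimes> inv T"
        using u by (simp add: m_assoc)
      then show ?thesis
        using edge True w w_notin_A hnn.AQ_mult_inv_T hnn.AQ_mult_T by blast
    next
      case False
      then have "f s \<in> A"
        using edge f_in_A by blast
      then show ?thesis
        using edge u w w_carrier hnn.AQ_mult_A_iff by blast
    qed
  next
    case cell
    have "g \<in> hnn.AQ"
      using cell w w_notin_A relator_prefix_in_cell by (blast intro: hnn.AQ_of_mult_cell)
    then show ?thesis
      using cell relator_prefix_in_cell hnn.AQ_mult_cell by blast
  qed
qed

lemma comp_verts_disjoint_AQ:
  assumes "A \<subseteq> S" "x \<notin> hnn.AQ"
  shows "comp_verts G f (insert t As) Rel S x \<subseteq> carrier G - hnn.AQ"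
proof
  fix y assume "y \<in> comp_verts G f (insert t As) Rel S x"
  then have x: "x \<in> carrier G" and path: "(cayley_adj G f (insert t As) Rel S)\<^sup>*\<^sup>* x y"
    by (auto simp: comp_verts_def)
  from path show "y \<in> carrier G - hnn.AQ"
  proof (induction rule: rtranclp_induct)
    case base
    then show ?case
      using x assms(2) by blast
  next
    case (step y z)
    have "z \<in> carrier G"
      using step.hyps(2) by (simp add: cayley_adj_def)
    moreover have "z \<notin> hnn.AQ"
      using cayley_adj_AQ[OF assms(1) step.hyps(2)] step.IH by blast
    ultimately show ?case
      by blast
  qed
qed

end

theorem lemma5p8:
  fixes G :: "('g, 'm) monoid_scheme" and f :: "'a \<Rightarrow> 'g"
    and t :: 'a and As :: "'a set" and R :: "'a word set" and phi :: "'a \<Rightarrow> 'a word"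
    and M N :: nat and v :: 'g
  assumes "finite As" and "t \<notin> As" and "finite R"
    and "\<forall>r\<in>R. word_over As r"
    and "\<forall>a\<in>As. word_over As (phi a)"
    and "is_presentation G f (insert t As) (torus_relators t As R phi)"
  defines "A \<equiv> {eval_word G f w | w. word_over As w}"
    and "T \<equiv> f t"
  defines "S0 \<equiv> {a \<otimes>\<^bsub>G\<^esub> inv\<^bsub>G\<^esub> (T [^]\<^bsub>G\<^esub> m) | a m. a \<in> A \<and> m \<le> M}"
    and "SN \<equiv> {T [^]\<^bsub>G\<^esub> N \<otimes>\<^bsub>G\<^esub> a \<otimes>\<^bsub>G\<^esub> inv\<^bsub>G\<^esub> (T [^]\<^bsub>G\<^esub> m) | a m. a \<in> A \<and> m \<le> M}"
  defines "K0 \<equiv> comp_verts G f (insert t As) (torus_relators t As R phi) S0 T"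
  assumes "v \<in> (\<lambda>g. T [^]\<^bsub>G\<^esub> N \<otimes>\<^bsub>G\<^esub> g) ` K0"
  shows "\<forall>n::nat. {v \<otimes>\<^bsub>G\<^esub> T [^]\<^bsub>G\<^esub> n \<otimes>\<^bsub>G\<^esub> a | a. a \<in> A} \<inter> SN = {}"
proof
  fix n :: nat
  interpret torus_presentation G f t As R phi
    using assms(2,4-6) by unfold_locales
  have "A \<subseteq> S0"
    unfolding A_def S0_def T_def by (rule hnn.A_subset_A_mult_inv_T_pows)
  moreover have "T \<notin> hnn.AQ"
    unfolding T_def using T_pow_notin_A by (rule hnn.T_notin_AQ)
  ultimately have "K0 \<subseteq> carrier G - hnn.AQ"
    unfolding K0_def A_def T_def by (rule comp_verts_disjoint_AQ)
  then obtain k where "k \<in> carrier G" "k \<notin> hnn.AQ" "v = T [^]\<^bsub>G\<^esub> N \<otimes>\<^bsub>G\<^esub> k"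
    using assms(12) by blast
  with hnn.translate_disjoint[of "T [^]\<^bsub>G\<^esub> N" k n]
  show "{v \<otimes>\<^bsub>G\<^esub> T [^]\<^bsub>G\<^esub> n \<otimes>\<^bsub>G\<^esub> a | a. a \<in> A} \<inter> SN = {}"
    unfolding SN_def A_def T_def by auto
qed

end
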